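(* The family $\mathcal{P}$ of pdCGs on the vertex set $V$, equipped with the twin order $\preceq_t$, is a complete distributive lattice. For $\mathcal{G},\mathcal{H}\in\mathcal{P}$ with quadruplet representations $\mathcal{G}=(V,E_{\mathcal{G}},\mathbb{L}_{\mathcal{G}},\mathbb{E}_{\mathcal{G}})$, $\mathcal{H}=(V,E_{\mathcal{H}},\mathbb{L}_{\mathcal{H}},\mathbb{E}_{\mathcal{H}})$: (i) the meet is $\mathcal{G}\wedge_t\mathcal{H}=(V,\,E_{\mathcal{G}}\cap E_{\mathcal{H}},\,\mathbb{L}_{\mathcal{G}}\cap\mathbb{L}_{\mathcal{H}},\,\mathbb{E}_{\mathcal{G}}\cap\mathbb{E}_{\mathcal{H}})$; (ii) the join is $\mathcal{G}\vee_t\mathcal{H}=(V,\,E_{\mathcal{G}}\cup E_{\mathcal{H}},\,\mathbb{L}_{\mathcal{G}}\cup\mathbb{L}_{\mathcal{H}},\,\mathbb{E}_{\mathcal{G}}\cup\mathbb{E}_{\mathcal{H}})$. Furthermore, the maximum element is $\hat 1=(V,F_V,L,F_L)$ (the complete graph with all colour classes atomic) and the minimum element is $\hat 0=(V,\emptyset,\emptyset,\emptyset)$ (the graph with no edges in which all vertices belong to twin-pairing classes).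
   Context: Let $V=\{1,\dots,p\}$ and let $\tau:V\to V$ be a twin-pairing function: $\tau(i)=j$ implies $\tau(j)=i$, and there is a partition $V=L\cup R$, $L\cap R=\emptyset$, with $\tau(L)=R$; vertices are numbered so that $L=\{1,\dots,q\}$, $R=\{q+1,\dots,p\}$. Let $F_V=\{(i,j)\mid i,j\in V,\ i<j\}$; extend $\tau$ to edges by $\tau(i,j)=(\tau(i),\tau(j))$ (endpoints reordered to lie in $F_V$) and to sets elementwise. Let $F_L=\{(i,j)\in F_V\mid i<\tau(j)\}$, $F_R=\{(i,j)\in F_V\mid i>\tau(j)\}$. A coloured graph is a pair $(\mathcal{V},\mathcal{E})$ with $\mathcal{V}$ a partition of $V$ and $\mathcal{E}$ a partition of an edge set $E\subseteq F_V$. A colour class is atomic if it has one element and twin-pairing if it is $\{i,\tau(i)\}$ or $\{(i,j),\tau(i,j)\}$ with $(i,j)\neq\tau(i,j)$. A pdCG is a coloured graph all of whose classes are atomic or twin-pairing; $\mathcal{P}$ is the set of pdCGs on $V$. Each pdCG $\mathcal{G}=(\mathcal{V},\mathcal{E})$ is identified with its quadruplet $(V,E_{\mathcal{G}},\mathbb{L}_{\mathcal{G}},\mathbb{E}_{\mathcal{G}})$, where $E_{\mathcal{G}}$ is its edge set, $\mathbb{L}_{\mathcal{G}}=\{i\in L\mid\{i\}\in\mathcal{V}\}$, and $\mathbb{E}_{\mathcal{G}}=\{(i,j)\in E_L\cap\tau(E_R)\mid\{(i,j)\}\in\mathcal{E}\}$ with $E_L=E_{\mathcal{G}}\cap F_L$,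 $E_R=E_{\mathcal{G}}\cap F_R$; this identification is a bijection between $\mathcal{P}$ and the quadruplets $(V,E,\mathbb{L},\mathbb{E})$ with $E\subseteq F_V$, $\mathbb{L}\subseteq L$, $\mathbb{E}\subseteq (E\cap F_L)\cap\tau(E\cap F_R)$. The twin order: $\mathcal{H}\preceq_t\mathcal{G}$ iff $E_{\mathcal{H}}\subseteq E_{\mathcal{G}}$, $\mathbb{L}_{\mathcal{H}}\subseteq\mathbb{L}_{\mathcal{G}}$ and $\mathbb{E}_{\mathcal{H}}\subseteq\mathbb{E}_{\mathcal{G}}$. *)

theory Defs
  imports "HOL-Library.Disjoint_Sets" "HOL-Algebra.Complete_Lattice"
begin

definition Vset :: "nat \<Rightarrow> nat set" where "Vset p = {1..p}"
definition Lset :: "nat \<Rightarrow> nat set" where "Lset q = {1..q}"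
definition Rset :: "nat \<Rightarrow> nat \<Rightarrow> nat set" where "Rset p q = {q+1..p}"

definition twin_pairing :: "nat \<Rightarrow> nat \<Rightarrow> (nat \<Rightarrow> nat) \<Rightarrow> bool" where
  "twin_pairing p q \<tau> \<longleftrightarrow>
     (\<forall>i\<in>Vset p. \<tau> i \<in> Vset p) \<and> (\<forall>i\<in>Vset p. \<tau> (\<tau> i) = i) \<and> \<tau> ` Lset q = Rset p q"

definition FV :: "nat \<Rightarrow> (nat \<times> nat) set" where
  "FV p = {(i,j). i \<in> Vset p \<and> j \<in> Vset p \<and> i < j}"

definition tau_edge :: "(nat \<Rightarrow> nat) \<Rightarrow> nat \<times> nat \<Rightarrow> nat \<times> nat" where
  "tau_edge \<tau> e = (min (\<tau> (fst e)) (\<tau> (snd e)), max (\<tau> (fst e)) (\<tau> (snd e)))"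

definition FL :: "nat \<Rightarrow> (nat \<Rightarrow> nat) \<Rightarrow> (nat \<times> nat) set" where
  "FL p \<tau> = {(i,j) \<in> FV p. i < \<tau> j}"

definition FR :: "nat \<Rightarrow> (nat \<Rightarrow> nat) \<Rightarrow> (nat \<times> nat) set" where
  "FR p \<tau> = {(i,j) \<in> FV p. i > \<tau> j}"

(* a coloured graph: (vertex partition, edge partition) *)
type_synonym cgraph = "nat set set \<times> (nat \<times> nat) set set"

definition atomic_class :: "'a set \<Rightarrow> bool" where
  "atomic_class C \<longleftrightarrow> (\<exists>x. C = {x})"

definition twin_vclass :: "(nat \<Rightarrow> nat) \<Rightarrow> nat set \<Rightarrow> bool" where
  "twin_vclass \<tau> C \<longleftrightarrow> (\<exists>i. C = {i, \<tau> i})"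

definition twin_eclass :: "(nat \<Rightarrow> nat) \<Rightarrow> (nat \<times> nat) set \<Rightarrow> bool" where
  "twin_eclass \<tau> C \<longleftrightarrow> (\<exists>e. C = {e, tau_edge \<tau> e} \<and> e \<noteq> tau_edge \<tau> e)"

definition coloured_graph :: "nat \<Rightarrow> cgraph \<Rightarrow> bool" where
  "coloured_graph p G \<longleftrightarrow>
     partition_on (Vset p) (fst G) \<and> (\<exists>E. E \<subseteq> FV p \<and> partition_on E (snd G))"

definition pdCGs :: "nat \<Rightarrow> (nat \<Rightarrow> nat) \<Rightarrow> cgraph set" where
  "pdCGs p \<tau> = {G. coloured_graph p G
      \<and> (\<forall>C\<in>fst G. atomic_class C \<or> twin_vclass \<tau> C)
      \<and> (\<forall>C\<in>snd G. atomic_class C \<or> twin_eclass \<tau> C)}"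

definition edges_of :: "cgraph \<Rightarrow> (nat \<times> nat) set" where
  "edges_of G = \<Union>(snd G)"

definition LL_of :: "nat \<Rightarrow> cgraph \<Rightarrow> nat set" where
  "LL_of q G = {i \<in> Lset q. {i} \<in> fst G}"

definition EE_of :: "nat \<Rightarrow> (nat \<Rightarrow> nat) \<Rightarrow> cgraph \<Rightarrow> (nat \<times> nat) set" where
  "EE_of p \<tau> G = {e \<in> (edges_of G \<inter> FL p \<tau>) \<inter> tau_edge \<tau> ` (edges_of G \<inter> FR p \<tau>).
                    {e} \<in> snd G}"

definition twin_le :: "nat \<Rightarrow> nat \<Rightarrow> (nat \<Rightarrow> nat) \<Rightarrow> cgraph \<Rightarrow> cgraph \<Rightarrow> bool" where
  "twin_le p q \<tau> H G \<longleftrightarrow>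
     edges_of H \<subseteq> edges_of G \<and> LL_of q H \<subseteq> LL_of q G \<and> EE_of p \<tau> H \<subseteq> EE_of p \<tau> G"

definition pdcg_order :: "nat \<Rightarrow> nat \<Rightarrow> (nat \<Rightarrow> nat) \<Rightarrow> cgraph gorder" where
  "pdcg_order p q \<tau> = \<lparr>carrier = pdCGs p \<tau>, eq = (=), le = twin_le p q \<tau>\<rparr>"

end

theory Submission
  imports Defs
begin

(* Both partitions of a pdCG are pairing partitions: every block is a singleton or a twin
   pair {x, \<tau> x}, and such a partition is determined by its singleton blocks. These are
   recorded by the quadruplet: a twin pair of vertices meets L exactly once, so LL decides
   it; an edge whose twin is absent is necessarily a singleton, and for a present twin pair
   exactly one member lies in F_L, so EE decides it. Conversely every quadruplet with
   E \<subseteq> F_V, LL \<subseteq> L and EE \<subseteq> E_L \<inter> \<tau>(E_R) is realised. So the twin order is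
   componentwise inclusion of quadruplets, and these are closed under arbitrary unions and
   under intersections taken inside (F_V, L, F_L): meets and joins are computed componentwise,
   and distributivity is that of the Boolean set operations. *)

lemma partition_on_image_of_blocks:
  assumes mem: "\<And>x. x \<in> S \<Longrightarrow> x \<in> block x"
    and sub: "\<And>x. x \<in> S \<Longrightarrow> block x \<subseteq> S"
    and eq: "\<And>x y. x \<in> S \<Longrightarrow> y \<in> block x \<Longrightarrow> block y = block x"
  shows "partition_on S (block ` S)"
proof (rule partition_onI)
  show "\<Union> (block ` S) = S"
    using mem sub by blast
  show "{} \<notin> block ` S"
    using mem by blast
  fix C D assume "C \<in> block ` S" "D \<in> block ` S" "C \<noteq> D"
  then obtain x y where "x \<in> S" "y \<in> S" "C = block x" "D = block y" "block x \<noteq> block y"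
    by blast
  then show "disjnt C D"
    using eq by (metis disjoint_iff disjnt_def)
qed

lemma partition_on_block_eq:
  assumes "partition_on S P" "C \<in> P" "D \<in> P" "x \<in> C" "x \<in> D"
  shows "C = D"
  using assms unfolding partition_on_def by (auto dest: disjointD)

definition pair_block :: "('a \<Rightarrow> 'a) \<Rightarrow> 'a set \<Rightarrow> 'a \<Rightarrow> 'a set" where
  "pair_block \<sigma> A x = (if x \<in> A \<or> \<sigma> x \<in> A then {x} else {x, \<sigma> x})"

definition pairing_partition :: "('a \<Rightarrow> 'a) \<Rightarrow> 'a set \<Rightarrow> 'a set set \<Rightarrow> bool" where
  "pairing_partition \<sigma> S P \<longleftrightarrow> partition_on S P \<and> (\<forall>C\<in>P. \<exists>x. C = {x} \<or> C = {x, \<sigma> x})"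

lemma pairing_partition_pair_blocks:
  assumes inv: "\<And>x. x \<in> S \<Longrightarrow> \<sigma> (\<sigma> x) = x"
    and closed: "\<And>x. x \<in> S \<Longrightarrow> x \<notin> A \<Longrightarrow> \<sigma> x \<notin> A \<Longrightarrow> \<sigma> x \<in> S"
  shows "pairing_partition \<sigma> S (pair_block \<sigma> A ` S)"
  unfolding pairing_partition_def
proof
  show "partition_on S (pair_block \<sigma> A ` S)"
  proof (rule partition_on_image_of_blocks)
    fix x y assume "x \<in> S" "y \<in> pair_block \<sigma> A x"
    then show "pair_block \<sigma> A y = pair_block \<sigma> A x"
      using inv[of x] by (auto simp: pair_block_def split: if_splits)
  qed (use closed in \<open>auto simp: pair_block_def\<close>)
  show "\<forall>C\<in>pair_block \<sigma> A ` S. \<exists>x. C = {x} \<or> C = {x, \<sigma> x}"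
    by (auto simp: pair_block_def)
qed

lemma singleton_in_pair_blocks_iff:
  assumes "x \<in> S"
  shows "{x} \<in> pair_block \<sigma> A ` S \<longleftrightarrow> x \<in> A \<or> \<sigma> x \<in> A \<or> \<sigma> x = x"
proof
  assume "{x} \<in> pair_block \<sigma> A ` S"
  then obtain y where "{x} = pair_block \<sigma> A y"
    by blast
  then show "x \<in> A \<or> \<sigma> x \<in> A \<or> \<sigma> x = x"
    by (auto simp: pair_block_def doubleton_eq_iff split: if_splits)
next
  assume "x \<in> A \<or> \<sigma> x \<in> A \<or> \<sigma> x = x"
  then have "pair_block \<sigma> A x = {x}"
    by (auto simp: pair_block_def)
  then show "{x} \<in> pair_block \<sigma> A ` S"
    using assms by (metis imageI)
qed

lemma pairing_partition_pair_of_non_singleton: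
  assumes P: "pairing_partition \<sigma> S P" and inv: "\<And>x. x \<in> S \<Longrightarrow> \<sigma> (\<sigma> x) = x"
    and x: "x \<in> S" "{x} \<notin> P"
  shows "{x, \<sigma> x} \<in> P" "\<sigma> x \<noteq> x" "\<sigma> x \<in> S"
proof -
  have part: "partition_on S P" and shape: "\<forall>C\<in>P. \<exists>z. C = {z} \<or> C = {z, \<sigma> z}"
    using P by (simp_all add: pairing_partition_def)
  obtain C where C: "C \<in> P" "x \<in> C"
    using partition_onD1[OF part] x(1) by blast
  obtain z where z: "C = {z} \<or> C = {z, \<sigma> z}"
    using shape C(1) by blast
  have "z \<in> S"
    using z C(1) partition_onD1[OF part] by blast
  then have "C = {x, \<sigma> x}"
    using z C x(2) inv by (auto simp: insert_commute)
  then show "{x, \<sigma> x} \<in> P" "\<sigma> x \<noteq> x" "\<sigma> x \<in> S"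
    using C(1) x(2) partition_onD1[OF part] by auto
qed

lemma pairing_partition_singleton_twin_iff:
  assumes P: "pairing_partition \<sigma> S P" and inv: "\<And>x. x \<in> S \<Longrightarrow> \<sigma> (\<sigma> x) = x"
    and x: "x \<in> S" "\<sigma> x \<in> S"
  shows "{\<sigma> x} \<in> P \<longleftrightarrow> {x} \<in> P"
proof -
  have part: "partition_on S P"
    using P by (simp add: pairing_partition_def)
  have False if y: "y \<in> S" "\<sigma> y \<in> S" "{y} \<in> P" "{\<sigma> y} \<notin> P" for y
  proof -
    have "{\<sigma> y, y} \<in> P" "\<sigma> y \<noteq> y"
      using pairing_partition_pair_of_non_singleton[OF P inv y(2,4)] inv[OF y(1)] by auto
    then show False
      using partition_on_block_eq[OF part y(3), of "{\<sigma> y, y}" y] by auto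
  qed
  from this[of x] this[of "\<sigma> x"] show ?thesis
    using x inv[OF x(1)] by auto
qed

lemma pairing_partition_eqI:
  assumes "pairing_partition \<sigma> S P" "pairing_partition \<sigma> S P'"
    and inv: "\<And>x. x \<in> S \<Longrightarrow> \<sigma> (\<sigma> x) = x"
    and "\<And>x. x \<in> S \<Longrightarrow> {x} \<in> P \<longleftrightarrow> {x} \<in> P'"
  shows "P = P'"
proof -
  have "Q \<subseteq> Q'"
    if Q: "pairing_partition \<sigma> S Q" and Q': "pairing_partition \<sigma> S Q'"
      and singletons: "\<And>x. x \<in> S \<Longrightarrow> {x} \<in> Q \<longleftrightarrow> {x} \<in> Q'" for Q Q'
  proof
    fix C assume C: "C \<in> Q"
    have part: "partition_on S Q"
      using Q by (simp add: pairing_partition_def)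
    obtain z where z: "C = {z} \<or> C = {z, \<sigma> z}"
      using Q C by (auto simp: pairing_partition_def)
    have "z \<in> S"
      using z C partition_onD1[OF part] by blast
    show "C \<in> Q'"
    proof (cases "{z} \<in> Q")
      case True
      then have "C = {z}"
        using partition_on_block_eq[OF part C True, of z] z by auto
      then show ?thesis
        using singletons[OF \<open>z \<in> S\<close>] True by simp
    next
      case False
      then have "C = {z, \<sigma> z}"
        using z C by auto
      moreover have "{z} \<notin> Q'"
        using singletons[OF \<open>z \<in> S\<close>] False by simp
      ultimately show ?thesis
        using pairing_partition_pair_of_non_singleton(1)[OF Q' inv \<open>z \<in> S\<close>] by simp
    qed
  qed
  then show ?thesis
    using assms by (metis subset_antisym)
qed

lemma atomic_or_twin_vclass_iff:
  "atomic_class C \<or> twin_vclass \<tau> C \<longleftrightarrow> (\<exists>x. C = {x} \<or> C = {x, \<tau> x})"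
  by (auto simp: atomic_class_def twin_vclass_def)

lemma atomic_or_twin_eclass_iff:
  "atomic_class C \<or> twin_eclass \<tau> C \<longleftrightarrow> (\<exists>e. C = {e} \<or> C = {e, tau_edge \<tau> e})"
  by (auto simp: atomic_class_def twin_eclass_def) metis

lemma coloured_graph_iff:
  "coloured_graph p G \<longleftrightarrow>
     partition_on (Vset p) (fst G) \<and> partition_on (edges_of G) (snd G) \<and> edges_of G \<subseteq> FV p"
  by (auto simp: coloured_graph_def edges_of_def dest: partition_onD1)

lemma pdCGs_iff:
  "G \<in> pdCGs p \<tau> \<longleftrightarrow>
     pairing_partition \<tau> (Vset p) (fst G) \<and> pairing_partition (tau_edge \<tau>) (edges_of G) (snd G)
     \<and> edges_of G \<subseteq> FV p"
  by (auto simp: pdCGs_def pairing_partition_def coloured_graph_iff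
      atomic_or_twin_vclass_iff atomic_or_twin_eclass_iff)

locale twin_paired =
  fixes p q :: nat and \<tau> :: "nat \<Rightarrow> nat"
  assumes twin_pairing: "twin_pairing p q \<tau>"
begin

abbreviation \<tau>\<^sub>e :: "nat \<times> nat \<Rightarrow> nat \<times> nat" where
  "\<tau>\<^sub>e \<equiv> tau_edge \<tau>"

lemma tau_in_V: "i \<in> Vset p \<Longrightarrow> \<tau> i \<in> Vset p"
  and tau_tau: "i \<in> Vset p \<Longrightarrow> \<tau> (\<tau> i) = i"
  and tau_L: "i \<in> Lset q \<Longrightarrow> \<tau> i \<in> Rset p q"
  using twin_pairing by (auto simp: twin_pairing_def)

lemma L_less_R: "i \<in> Lset q \<Longrightarrow> j \<in> Rset p q \<Longrightarrow> i < j"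
  by (auto simp: Lset_def Rset_def)

(* q \<le> p is not assumed separately: for q > 0 it follows from \<tau> 1 \<in> R *)
lemma L_subset_V: "Lset q \<subseteq> Vset p"
proof (cases "q = 0")
  case False
  then have "\<tau> 1 \<in> Rset p q"
    by (intro tau_L) (simp add: Lset_def)
  then show ?thesis
    by (auto simp: Lset_def Rset_def Vset_def)
qed (simp add: Lset_def)

lemma V_eq_L_Un_R: "Vset p = Lset q \<union> Rset p q"
  using L_subset_V by (auto simp: Vset_def Lset_def Rset_def)

lemma L_Int_R: "Lset q \<inter> Rset p q = {}"
  by (auto simp: Lset_def Rset_def)

lemma tau_R:
  assumes "i \<in> Rset p q"
  shows "\<tau> i \<in> Lset q"
proof -
  obtain j where "j \<in> Lset q" "i = \<tau> j"
    using assms twin_pairing unfolding twin_pairing_def by blast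
  then show ?thesis
    using L_subset_V tau_tau by auto
qed

lemma tau_neq: "i \<in> Vset p \<Longrightarrow> \<tau> i \<noteq> i"
  using V_eq_L_Un_R tau_L tau_R L_less_R by (metis Un_iff less_irrefl)

lemma tau_edge_in_FV: "e \<in> FV p \<Longrightarrow> \<tau>\<^sub>e e \<in> FV p"
  and tau_edge_tau_edge: "e \<in> FV p \<Longrightarrow> \<tau>\<^sub>e (\<tau>\<^sub>e e) = e"
proof -
  assume "e \<in> FV p"
  then obtain i j where ij: "e = (i, j)" "i \<in> Vset p" "j \<in> Vset p" "i < j"
    by (auto simp: FV_def)
  moreover have "\<tau> i \<noteq> \<tau> j"
    using ij tau_tau by (metis less_irrefl)
  ultimately show "\<tau>\<^sub>e e \<in> FV p" "\<tau>\<^sub>e (\<tau>\<^sub>e e) = e"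
    using tau_in_V tau_tau by (auto simp: FV_def tau_edge_def min_def max_def)
qed

lemma less_tau_iff_less_tau:
  assumes "i \<in> Vset p" "j \<in> Vset p" "i < j" "\<tau> i < \<tau> j"
  shows "i < \<tau> j \<longleftrightarrow> j < \<tau> i"
  using assms V_eq_L_Un_R tau_L tau_R L_less_R by (metis UnE less_asym order.strict_trans)

lemma FL_iff_tau_edge_FR:
  assumes "e \<in> FV p"
  shows "e \<in> FL p \<tau> \<longleftrightarrow> \<tau>\<^sub>e e \<in> FR p \<tau>"
proof -
  obtain i j where ij: "e = (i, j)" "i \<in> Vset p" "j \<in> Vset p" "i < j"
    using assms by (auto simp: FV_def)
  have "\<tau> i \<noteq> \<tau> j"
    using ij tau_tau by (metis less_irrefl)
  then consider "\<tau> i < \<tau> j" | "\<tau> j < \<tau> i"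
    by linarith
  then show ?thesis
  proof cases
    case 1
    then show ?thesis
      using assms ij less_tau_iff_less_tau[OF ij(2-4) 1] tau_edge_in_FV[OF assms] tau_tau
      by (auto simp: FL_def FR_def tau_edge_def)
  next
    case 2
    then show ?thesis
      using assms ij tau_edge_in_FV[OF assms] tau_tau
      by (auto simp: FL_def FR_def tau_edge_def)
  qed
qed

lemma FL_subset_FV: "FL p \<tau> \<subseteq> FV p"
  by (auto simp: FL_def)

lemma FL_FR_disjoint: "FL p \<tau> \<inter> FR p \<tau> = {}"
  by (auto simp: FL_def FR_def)

lemma tau_edge_neq_if_FL: "e \<in> FL p \<tau> \<Longrightarrow> \<tau>\<^sub>e e \<noteq> e"
  using FL_iff_tau_edge_FR FL_FR_disjoint by (fastforce simp: FL_def)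

lemma FL_or_FR_if_tau_edge_neq:
  assumes "e \<in> FV p" "\<tau>\<^sub>e e \<noteq> e"
  shows "e \<in> FL p \<tau> \<or> e \<in> FR p \<tau>"
proof (rule ccontr)
  obtain i j where ij: "e = (i, j)" "i \<in> Vset p" "j \<in> Vset p" "i < j"
    using assms(1) by (auto simp: FV_def)
  assume "\<not> (e \<in> FL p \<tau> \<or> e \<in> FR p \<tau>)"
  then have "i = \<tau> j"
    using assms(1) ij by (auto simp: FL_def FR_def)
  then have "\<tau>\<^sub>e e = e"
    using ij tau_tau by (auto simp: tau_edge_def)
  with assms(2) show False ..
qed

definition quadruplet :: "(nat \<times> nat) set \<Rightarrow> nat set \<Rightarrow> (nat \<times> nat) set \<Rightarrow> bool" where
  "quadruplet E LL EE \<longleftrightarrow>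
     E \<subseteq> FV p \<and> LL \<subseteq> Lset q \<and> EE \<subseteq> (E \<inter> FL p \<tau>) \<inter> \<tau>\<^sub>e ` (E \<inter> FR p \<tau>)"

lemma mem_tau_edge_image_FR_iff:
  assumes e: "e \<in> FL p \<tau>" and E: "E \<subseteq> FV p"
  shows "e \<in> \<tau>\<^sub>e ` (E \<inter> FR p \<tau>) \<longleftrightarrow> \<tau>\<^sub>e e \<in> E"
proof
  assume "e \<in> \<tau>\<^sub>e ` (E \<inter> FR p \<tau>)"
  then show "\<tau>\<^sub>e e \<in> E"
    using E tau_edge_tau_edge by auto
next
  have eF: "e \<in> FV p"
    using e FL_subset_FV by blast
  assume "\<tau>\<^sub>e e \<in> E"
  moreover have "\<tau>\<^sub>e e \<in> FR p \<tau>"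
    using FL_iff_tau_edge_FR[OF eF] e by simp
  ultimately show "e \<in> \<tau>\<^sub>e ` (E \<inter> FR p \<tau>)"
    using tau_edge_tau_edge[OF eF] by (metis IntI imageI)
qed

lemma quadruplet_iff:
  "quadruplet E LL EE \<longleftrightarrow>
     E \<subseteq> FV p \<and> LL \<subseteq> Lset q \<and> (\<forall>e\<in>EE. e \<in> E \<and> e \<in> FL p \<tau> \<and> \<tau>\<^sub>e e \<in> E)"
proof (cases "E \<subseteq> FV p")
  case True
  then show ?thesis
    using mem_tau_edge_image_FR_iff[OF _ True] unfolding quadruplet_def by blast
qed (simp add: quadruplet_def)

lemma EE_of_eq:
  assumes "edges_of G \<subseteq> FV p"
  shows "EE_of p \<tau> G = {e \<in> edges_of G \<inter> FL p \<tau>. \<tau>\<^sub>e e \<in> edges_of G \<and> {e} \<in> snd G}"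
  using mem_tau_edge_image_FR_iff[OF _ assms] by (auto simp: EE_of_def)

lemma quadruplet_of_pdCG:
  "G \<in> pdCGs p \<tau> \<Longrightarrow> quadruplet (edges_of G) (LL_of q G) (EE_of p \<tau> G)"
  by (auto simp: quadruplet_def pdCGs_iff LL_of_def EE_of_def)

(* an edge whose twin is missing from E must form an atomic class *)
definition pdcg_of :: "(nat \<times> nat) set \<Rightarrow> nat set \<Rightarrow> (nat \<times> nat) set \<Rightarrow> cgraph" where
  "pdcg_of E LL EE = (pair_block \<tau> LL ` Vset p, pair_block \<tau>\<^sub>e (EE \<union> {e. \<tau>\<^sub>e e \<notin> E}) ` E)"

lemma pairing_partition_pdcg_of_vertices:
  "pairing_partition \<tau> (Vset p) (fst (pdcg_of E LL EE))"
  unfolding pdcg_of_def fst_conv by (rule pairing_partition_pair_blocks) (use tau_tau tau_in_V in auto)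

lemma pairing_partition_pdcg_of_edges:
  assumes "E \<subseteq> FV p"
  shows "pairing_partition \<tau>\<^sub>e E (snd (pdcg_of E LL EE))"
  unfolding pdcg_of_def snd_conv
  by (rule pairing_partition_pair_blocks) (use assms tau_edge_tau_edge in auto)

lemma edges_of_pdcg_of:
  assumes "E \<subseteq> FV p"
  shows "edges_of (pdcg_of E LL EE) = E"
proof -
  have "partition_on E (snd (pdcg_of E LL EE))"
    using pairing_partition_pdcg_of_edges[OF assms] by (simp add: pairing_partition_def)
  then show ?thesis
    unfolding edges_of_def by (rule partition_onD1[symmetric])
qed

lemma pdcg_of_in_pdCGs: "E \<subseteq> FV p \<Longrightarrow> pdcg_of E LL EE \<in> pdCGs p \<tau>"
  by (simp add: pdCGs_iff edges_of_pdcg_of pairing_partition_pdcg_of_vertices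
      pairing_partition_pdcg_of_edges)

lemma LL_of_pdcg_of:
  assumes "LL \<subseteq> Lset q"
  shows "LL_of q (pdcg_of E LL EE) = LL"
proof -
  have "{i} \<in> fst (pdcg_of E LL EE) \<longleftrightarrow> i \<in> LL" if i: "i \<in> Lset q" for i
  proof -
    have "\<tau> i \<notin> LL"
      using tau_L[OF i] L_Int_R assms by blast
    moreover have "\<tau> i \<noteq> i"
      using tau_neq i L_subset_V by blast
    ultimately show ?thesis
      using singleton_in_pair_blocks_iff[of i "Vset p" \<tau> LL] i L_subset_V
      by (auto simp: pdcg_of_def)
  qed
  then show ?thesis
    using assms by (auto simp: LL_of_def)
qed

lemma EE_of_pdcg_of:
  assumes "quadruplet E LL EE"
  shows "EE_of p \<tau> (pdcg_of E LL EE) = EE"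
proof -
  have E: "E \<subseteq> FV p" and EE: "\<forall>e\<in>EE. e \<in> E \<and> e \<in> FL p \<tau> \<and> \<tau>\<^sub>e e \<in> E"
    using assms by (simp_all add: quadruplet_iff)
  have "{e} \<in> snd (pdcg_of E LL EE) \<longleftrightarrow> e \<in> EE"
    if e: "e \<in> E" "e \<in> FL p \<tau>" "\<tau>\<^sub>e e \<in> E" for e
  proof -
    have "\<tau>\<^sub>e e \<in> FR p \<tau>"
      using FL_iff_tau_edge_FR e E by blast
    then have "\<tau>\<^sub>e e \<notin> EE"
      using EE FL_FR_disjoint by blast
    moreover have "\<tau>\<^sub>e e \<noteq> e"
      using tau_edge_neq_if_FL e(2) by blast
    moreover have "\<tau>\<^sub>e (\<tau>\<^sub>e e) = e"
      using tau_edge_tau_edge e(1) E by blast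
    ultimately show ?thesis
      using singleton_in_pair_blocks_iff[OF e(1)] e by (simp add: pdcg_of_def)
  qed
  then show ?thesis
    using EE_of_eq[of "pdcg_of E LL EE"] edges_of_pdcg_of[OF E] E EE by auto
qed

lemma vertex_singleton_iff:
  assumes G: "G \<in> pdCGs p \<tau>" and i: "i \<in> Vset p"
  shows "{i} \<in> fst G \<longleftrightarrow> i \<in> LL_of q G \<or> \<tau> i \<in> LL_of q G"
proof -
  have P: "pairing_partition \<tau> (Vset p) (fst G)"
    using G by (simp add: pdCGs_iff)
  have "i \<in> Lset q \<or> i \<in> Rset p q"
    using i V_eq_L_Un_R by blast
  then show ?thesis
  proof
    assume "i \<in> Lset q"
    then show ?thesis
      using tau_L L_Int_R by (auto simp: LL_of_def)
  next
    assume iR: "i \<in> Rset p q"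
    have "{\<tau> i} \<in> fst G \<longleftrightarrow> {i} \<in> fst G"
      by (rule pairing_partition_singleton_twin_iff[OF P tau_tau i tau_in_V[OF i]])
    then show ?thesis
      using iR tau_R L_Int_R by (auto simp: LL_of_def)
  qed
qed

lemma edge_singleton_iff:
  assumes G: "G \<in> pdCGs p \<tau>" and e: "e \<in> edges_of G"
  shows "{e} \<in> snd G \<longleftrightarrow>
    e \<in> EE_of p \<tau> G \<or> \<tau>\<^sub>e e \<in> EE_of p \<tau> G \<or> \<tau>\<^sub>e e \<notin> edges_of G \<or> \<tau>\<^sub>e e = e"
proof -
  have P: "pairing_partition \<tau>\<^sub>e (edges_of G) (snd G)" and EF: "edges_of G \<subseteq> FV p"
    using G by (simp_all add: pdCGs_iff)
  have inv: "\<And>f. f \<in> edges_of G \<Longrightarrow> \<tau>\<^sub>e (\<tau>\<^sub>e f) = f"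
    using EF tau_edge_tau_edge by blast
  have eF: "e \<in> FV p"
    using e EF by blast
  note EE = EE_of_eq[OF EF]
  show ?thesis
  proof (cases "\<tau>\<^sub>e e \<in> edges_of G \<and> \<tau>\<^sub>e e \<noteq> e")
    case False
    then have "{e} \<in> snd G"
      using pairing_partition_pair_of_non_singleton(2,3)[OF P inv e] by blast
    then show ?thesis
      using False by blast
  next
    case True
    have "e \<in> FL p \<tau> \<longleftrightarrow> \<tau>\<^sub>e e \<in> FR p \<tau>" "\<tau>\<^sub>e e \<in> FL p \<tau> \<longleftrightarrow> e \<in> FR p \<tau>"
      using FL_iff_tau_edge_FR tau_edge_in_FV tau_edge_tau_edge eF by metis+
    moreover have "e \<in> FL p \<tau> \<or> e \<in> FR p \<tau>"
      using FL_or_FR_if_tau_edge_neq[OF eF] True by blast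
    moreover have "{\<tau>\<^sub>e e} \<in> snd G \<longleftrightarrow> {e} \<in> snd G"
      using pairing_partition_singleton_twin_iff[OF P inv e] True by blast
    ultimately show ?thesis
      using EE True e FL_FR_disjoint inv[OF e] by auto
  qed
qed

lemma pdcg_of_quadruplet:
  assumes G: "G \<in> pdCGs p \<tau>"
  shows "pdcg_of (edges_of G) (LL_of q G) (EE_of p \<tau> G) = G"
proof -
  let ?H = "pdcg_of (edges_of G) (LL_of q G) (EE_of p \<tau> G)"
  have PV: "pairing_partition \<tau> (Vset p) (fst G)"
    and PE: "pairing_partition \<tau>\<^sub>e (edges_of G) (snd G)" and EF: "edges_of G \<subseteq> FV p"
    using G by (simp_all add: pdCGs_iff)
  have "{i} \<in> fst ?H \<longleftrightarrow> {i} \<in> fst G" if i: "i \<in> Vset p" for i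
    using singleton_in_pair_blocks_iff[OF i] vertex_singleton_iff[OF G i] tau_neq[OF i]
    by (simp add: pdcg_of_def)
  then have "fst ?H = fst G"
    using pairing_partition_eqI[OF pairing_partition_pdcg_of_vertices PV tau_tau] by blast
  moreover have "snd ?H = snd G"
    by (rule pairing_partition_eqI[OF pairing_partition_pdcg_of_edges[OF EF] PE])
      (use EF tau_edge_tau_edge in \<open>auto simp: pdcg_of_def singleton_in_pair_blocks_iff
        edge_singleton_iff[OF G]\<close>)
  ultimately show ?thesis
    by (simp add: prod_eq_iff)
qed

lemma pdCGs_eqI:
  assumes "G \<in> pdCGs p \<tau>" "H \<in> pdCGs p \<tau>"
    and "edges_of G = edges_of H" "LL_of q G = LL_of q H" "EE_of p \<tau> G = EE_of p \<tau> H"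
  shows "G = H"
  using pdcg_of_quadruplet assms by metis

lemma pdcg_of_components:
  assumes "quadruplet E LL EE"
  shows "pdcg_of E LL EE \<in> pdCGs p \<tau>" "edges_of (pdcg_of E LL EE) = E"
    "LL_of q (pdcg_of E LL EE) = LL" "EE_of p \<tau> (pdcg_of E LL EE) = EE"
  using assms pdcg_of_in_pdCGs edges_of_pdcg_of LL_of_pdcg_of EE_of_pdcg_of
  by (simp_all add: quadruplet_def)

lemma quadruplet_UN:
  assumes "\<And>i. i \<in> I \<Longrightarrow> quadruplet (E i) (LL i) (EE i)"
  shows "quadruplet (\<Union>i\<in>I. E i) (\<Union>i\<in>I. LL i) (\<Union>i\<in>I. EE i)"
  using assms unfolding quadruplet_iff by blast

lemma quadruplet_INT:
  assumes "\<And>i. i \<in> I \<Longrightarrow> quadruplet (E i) (LL i) (EE i)"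
  shows "quadruplet (FV p \<inter> (\<Inter>i\<in>I. E i)) (Lset q \<inter> (\<Inter>i\<in>I. LL i)) (FL p \<tau> \<inter> (\<Inter>i\<in>I. EE i))"
  unfolding quadruplet_iff
proof (intro conjI ballI)
  fix e assume e: "e \<in> FL p \<tau> \<inter> (\<Inter>i\<in>I. EE i)"
  have "e \<in> E i \<and> \<tau>\<^sub>e e \<in> E i" if "i \<in> I" for i
    using assms[OF that] e that unfolding quadruplet_iff by blast
  moreover have "e \<in> FV p" "\<tau>\<^sub>e e \<in> FV p"
    using e FL_subset_FV tau_edge_in_FV by blast+
  ultimately show "e \<in> FV p \<inter> (\<Inter>i\<in>I. E i)" "e \<in> FL p \<tau>" "\<tau>\<^sub>e e \<in> FV p \<inter> (\<Inter>i\<in>I. E i)"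
    using e by blast+
qed auto

definition pdcg_Sup :: "cgraph set \<Rightarrow> cgraph" where
  "pdcg_Sup A = pdcg_of (\<Union>G\<in>A. edges_of G) (\<Union>G\<in>A. LL_of q G) (\<Union>G\<in>A. EE_of p \<tau> G)"

(* intersecting with (F_V, L, F_L) makes the empty infimum the top element *)
definition pdcg_Inf :: "cgraph set \<Rightarrow> cgraph" where
  "pdcg_Inf A =
     pdcg_of (FV p \<inter> (\<Inter>G\<in>A. edges_of G)) (Lset q \<inter> (\<Inter>G\<in>A. LL_of q G))
       (FL p \<tau> \<inter> (\<Inter>G\<in>A. EE_of p \<tau> G))"

lemma pdcg_Sup_components:
  assumes "A \<subseteq> pdCGs p \<tau>"
  shows "pdcg_Sup A \<in> pdCGs p \<tau>" "edges_of (pdcg_Sup A) = (\<Union>G\<in>A. edges_of G)"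
    "LL_of q (pdcg_Sup A) = (\<Union>G\<in>A. LL_of q G)" "EE_of p \<tau> (pdcg_Sup A) = (\<Union>G\<in>A. EE_of p \<tau> G)"
  unfolding pdcg_Sup_def
  by (rule pdcg_of_components, rule quadruplet_UN, use assms quadruplet_of_pdCG in blast)+

lemma pdcg_Inf_components:
  assumes "A \<subseteq> pdCGs p \<tau>"
  shows "pdcg_Inf A \<in> pdCGs p \<tau>" "edges_of (pdcg_Inf A) = FV p \<inter> (\<Inter>G\<in>A. edges_of G)"
    "LL_of q (pdcg_Inf A) = Lset q \<inter> (\<Inter>G\<in>A. LL_of q G)"
    "EE_of p \<tau> (pdcg_Inf A) = FL p \<tau> \<inter> (\<Inter>G\<in>A. EE_of p \<tau> G)"
  unfolding pdcg_Inf_def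
  by (rule pdcg_of_components, rule quadruplet_INT, use assms quadruplet_of_pdCG in blast)+

abbreviation PO :: "cgraph gorder" where
  "PO \<equiv> pdcg_order p q \<tau>"

lemma pdcg_order_simps [simp]:
  "carrier PO = pdCGs p \<tau>" "le PO = twin_le p q \<tau>" "eq PO = (=)"
  by (simp_all add: pdcg_order_def)

lemma twin_le_antisym:
  assumes "G \<in> pdCGs p \<tau>" "H \<in> pdCGs p \<tau>" "twin_le p q \<tau> G H" "twin_le p q \<tau> H G"
  shows "G = H"
  using assms unfolding twin_le_def by (metis pdCGs_eqI subset_antisym)

lemma partial_order_pdcg_order: "partial_order PO"
proof
  fix G H K
  show "G \<sqsubseteq>\<^bsub>PO\<^esub> G"
    by (simp add: twin_le_def)
  show "G \<sqsubseteq>\<^bsub>PO\<^esub> H \<Longrightarrow> H \<sqsubseteq>\<^bsub>PO\<^esub> G \<Longrightarrow> G \<in> carrier PO \<Longrightarrow> H \<in> carrier PO \<Longrightarrow> G .=\<^bsub>PO\<^esub> H"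
    using twin_le_antisym by simp
  show "G \<sqsubseteq>\<^bsub>PO\<^esub> H \<Longrightarrow> H \<sqsubseteq>\<^bsub>PO\<^esub> K \<Longrightarrow> G \<sqsubseteq>\<^bsub>PO\<^esub> K"
    unfolding pdcg_order_simps twin_le_def by blast
qed simp_all

lemma least_pdcg_Sup:
  assumes A: "A \<subseteq> pdCGs p \<tau>"
  shows "least PO (pdcg_Sup A) (Upper PO A)"
proof (rule least_UpperI)
  note Sup = pdcg_Sup_components[OF A]
  show "G \<sqsubseteq>\<^bsub>PO\<^esub> pdcg_Sup A" if "G \<in> A" for G
    using that unfolding pdcg_order_simps twin_le_def Sup by blast
  show "pdcg_Sup A \<sqsubseteq>\<^bsub>PO\<^esub> U" if "U \<in> Upper PO A" for U
  proof -
    have "\<forall>G\<in>A. twin_le p q \<tau> G U"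
      using that A unfolding Upper_def pdcg_order_simps by blast
    then show ?thesis
      unfolding pdcg_order_simps twin_le_def Sup by blast
  qed
qed (use A pdcg_Sup_components[OF A] in simp_all)

lemma greatest_pdcg_Inf:
  assumes A: "A \<subseteq> pdCGs p \<tau>"
  shows "greatest PO (pdcg_Inf A) (Lower PO A)"
proof (rule greatest_LowerI)
  note Inf = pdcg_Inf_components[OF A]
  show "pdcg_Inf A \<sqsubseteq>\<^bsub>PO\<^esub> G" if "G \<in> A" for G
    using that unfolding pdcg_order_simps twin_le_def Inf by blast
  show "U \<sqsubseteq>\<^bsub>PO\<^esub> pdcg_Inf A" if "U \<in> Lower PO A" for U
  proof -
    have "\<forall>G\<in>A. twin_le p q \<tau> U G" and U: "U \<in> pdCGs p \<tau>"
      using that A unfolding Lower_def pdcg_order_simps by blast+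
    moreover have "edges_of U \<subseteq> FV p" "LL_of q U \<subseteq> Lset q" "EE_of p \<tau> U \<subseteq> FL p \<tau>"
      using quadruplet_of_pdCG[OF U] unfolding quadruplet_iff by blast+
    ultimately show ?thesis
      unfolding pdcg_order_simps twin_le_def Inf by blast
  qed
qed (use A pdcg_Inf_components[OF A] in simp_all)

lemma complete_lattice_pdcg_order: "complete_lattice PO"
proof (rule partial_order.complete_latticeI[OF partial_order_pdcg_order])
  fix A assume "A \<subseteq> carrier PO"
  then have A: "A \<subseteq> pdCGs p \<tau>"
    by simp
  show "\<exists>s. least PO s (Upper PO A)"
    using least_pdcg_Sup[OF A] by (rule exI)
  show "\<exists>i. greatest PO i (Lower PO A)"
    using greatest_pdcg_Inf[OF A] by (rule exI)
qed

end

sublocale twin_paired \<subseteq> pdcg: complete_lattice "pdcg_order p q \<tau>"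
  by (rule complete_lattice_pdcg_order)

context twin_paired
begin

lemma Sup_eq_pdcg_Sup:
  assumes "A \<subseteq> pdCGs p \<tau>"
  shows "\<Squnion>\<^bsub>PO\<^esub> A = pdcg_Sup A"
  using pdcg.least_unique[OF pdcg.sup_lub least_pdcg_Sup[OF assms]] assms by simp

lemma Inf_eq_pdcg_Inf:
  assumes "A \<subseteq> pdCGs p \<tau>"
  shows "\<Sqinter>\<^bsub>PO\<^esub> A = pdcg_Inf A"
  using pdcg.greatest_unique[OF pdcg.inf_glb greatest_pdcg_Inf[OF assms]] assms by simp

lemma join_components:
  assumes "G \<in> pdCGs p \<tau>" "H \<in> pdCGs p \<tau>"
  shows "G \<squnion>\<^bsub>PO\<^esub> H \<in> pdCGs p \<tau>"
    "edges_of (G \<squnion>\<^bsub>PO\<^esub> H) = edges_of G \<union> edges_of H"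
    "LL_of q (G \<squnion>\<^bsub>PO\<^esub> H) = LL_of q G \<union> LL_of q H"
    "EE_of p \<tau> (G \<squnion>\<^bsub>PO\<^esub> H) = EE_of p \<tau> G \<union> EE_of p \<tau> H"
proof -
  have GH: "{G, H} \<subseteq> pdCGs p \<tau>"
    using assms by simp
  then have "G \<squnion>\<^bsub>PO\<^esub> H = pdcg_Sup {G, H}"
    unfolding join_def by (rule Sup_eq_pdcg_Sup)
  with pdcg_Sup_components[OF GH]
  show "G \<squnion>\<^bsub>PO\<^esub> H \<in> pdCGs p \<tau>"
    "edges_of (G \<squnion>\<^bsub>PO\<^esub> H) = edges_of G \<union> edges_of H"
    "LL_of q (G \<squnion>\<^bsub>PO\<^esub> H) = LL_of q G \<union> LL_of q H"
    "EE_of p \<tau> (G \<squnion>\<^bsub>PO\<^esub> H) = EE_of p \<tau> G \<union> EE_of p \<tau> H"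
    by simp_all
qed

lemma meet_components:
  assumes "G \<in> pdCGs p \<tau>" "H \<in> pdCGs p \<tau>"
  shows "G \<sqinter>\<^bsub>PO\<^esub> H \<in> pdCGs p \<tau>"
    "edges_of (G \<sqinter>\<^bsub>PO\<^esub> H) = edges_of G \<inter> edges_of H"
    "LL_of q (G \<sqinter>\<^bsub>PO\<^esub> H) = LL_of q G \<inter> LL_of q H"
    "EE_of p \<tau> (G \<sqinter>\<^bsub>PO\<^esub> H) = EE_of p \<tau> G \<inter> EE_of p \<tau> H"
proof -
  have GH: "{G, H} \<subseteq> pdCGs p \<tau>"
    using assms by simp
  then have "G \<sqinter>\<^bsub>PO\<^esub> H = pdcg_Inf {G, H}"
    unfolding meet_def by (rule Inf_eq_pdcg_Inf)
  moreover have "edges_of G \<subseteq> FV p" "LL_of q G \<subseteq> Lset q" "EE_of p \<tau> G \<subseteq> FL p \<tau>"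
    using quadruplet_of_pdCG[OF assms(1)] unfolding quadruplet_iff by blast+
  ultimately show "G \<sqinter>\<^bsub>PO\<^esub> H \<in> pdCGs p \<tau>"
    "edges_of (G \<sqinter>\<^bsub>PO\<^esub> H) = edges_of G \<inter> edges_of H"
    "LL_of q (G \<sqinter>\<^bsub>PO\<^esub> H) = LL_of q G \<inter> LL_of q H"
    "EE_of p \<tau> (G \<sqinter>\<^bsub>PO\<^esub> H) = EE_of p \<tau> G \<inter> EE_of p \<tau> H"
    using pdcg_Inf_components[OF GH] by auto
qed

lemma meet_join_distrib:
  assumes "G \<in> pdCGs p \<tau>" "H \<in> pdCGs p \<tau>" "K \<in> pdCGs p \<tau>"
  shows "G \<sqinter>\<^bsub>PO\<^esub> (H \<squnion>\<^bsub>PO\<^esub> K) = (G \<sqinter>\<^bsub>PO\<^esub> H) \<squnion>\<^bsub>PO\<^esub> (G \<sqinter>\<^bsub>PO\<^esub> K)"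
  using assms by (intro pdCGs_eqI) (simp_all add: join_components meet_components Int_Un_distrib)

lemma top_eq_pdcg_Inf_empty: "\<top>\<^bsub>PO\<^esub> = pdcg_Inf {}"
  using pdcg.weak_inf_empty Inf_eq_pdcg_Inf[of "{}"] by simp

lemma bottom_eq_pdcg_Sup_empty: "\<bottom>\<^bsub>PO\<^esub> = pdcg_Sup {}"
  using pdcg.weak_sup_empty Sup_eq_pdcg_Sup[of "{}"] by simp

lemma top_components:
  "edges_of \<top>\<^bsub>PO\<^esub> = FV p" "LL_of q \<top>\<^bsub>PO\<^esub> = Lset q" "EE_of p \<tau> \<top>\<^bsub>PO\<^esub> = FL p \<tau>"
  using pdcg_Inf_components[of "{}"] by (simp_all add: top_eq_pdcg_Inf_empty)

lemma bottom_components: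
  "edges_of \<bottom>\<^bsub>PO\<^esub> = {}" "LL_of q \<bottom>\<^bsub>PO\<^esub> = {}" "EE_of p \<tau> \<bottom>\<^bsub>PO\<^esub> = {}"
  using pdcg_Sup_components[of "{}"] by (simp_all add: bottom_eq_pdcg_Sup_empty)

end

theorem theorem6:
  fixes p q :: nat and \<tau> :: "nat \<Rightarrow> nat"
  assumes "twin_pairing p q \<tau>"
  shows "complete_lattice (pdcg_order p q \<tau>)
    \<and> (\<forall>G\<in>pdCGs p \<tau>. \<forall>H\<in>pdCGs p \<tau>. \<forall>K\<in>pdCGs p \<tau>.
           G \<sqinter>\<^bsub>pdcg_order p q \<tau>\<^esub> (H \<squnion>\<^bsub>pdcg_order p q \<tau>\<^esub> K)
         = (G \<sqinter>\<^bsub>pdcg_order p q \<tau>\<^esub> H) \<squnion>\<^bsub>pdcg_order p q \<tau>\<^esub> (G \<sqinter>\<^bsub>pdcg_order p q \<tau>\<^esub> K))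
    \<and> (\<forall>G\<in>pdCGs p \<tau>. \<forall>H\<in>pdCGs p \<tau>.
           edges_of (G \<sqinter>\<^bsub>pdcg_order p q \<tau>\<^esub> H) = edges_of G \<inter> edges_of H
         \<and> LL_of q (G \<sqinter>\<^bsub>pdcg_order p q \<tau>\<^esub> H) = LL_of q G \<inter> LL_of q H
         \<and> EE_of p \<tau> (G \<sqinter>\<^bsub>pdcg_order p q \<tau>\<^esub> H) = EE_of p \<tau> G \<inter> EE_of p \<tau> H)
    \<and> (\<forall>G\<in>pdCGs p \<tau>. \<forall>H\<in>pdCGs p \<tau>.
           edges_of (G \<squnion>\<^bsub>pdcg_order p q \<tau>\<^esub> H) = edges_of G \<union> edges_of H
         \<and> LL_of q (G \<squnion>\<^bsub>pdcg_order p q \<tau>\<^esub> H) = LL_of q G \<union> LL_of q H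
         \<and> EE_of p \<tau> (G \<squnion>\<^bsub>pdcg_order p q \<tau>\<^esub> H) = EE_of p \<tau> G \<union> EE_of p \<tau> H)
    \<and> (edges_of (\<top>\<^bsub>pdcg_order p q \<tau>\<^esub>) = FV p
         \<and> LL_of q (\<top>\<^bsub>pdcg_order p q \<tau>\<^esub>) = Lset q
         \<and> EE_of p \<tau> (\<top>\<^bsub>pdcg_order p q \<tau>\<^esub>) = FL p \<tau>)
    \<and> (edges_of (\<bottom>\<^bsub>pdcg_order p q \<tau>\<^esub>) = {}
         \<and> LL_of q (\<bottom>\<^bsub>pdcg_order p q \<tau>\<^esub>) = {}
         \<and> EE_of p \<tau> (\<bottom>\<^bsub>pdcg_order p q \<tau>\<^esub>) = {})"
proof -
  interpret twin_paired p q \<tau>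
    using assms by (rule twin_paired.intro)
  show ?thesis
    using complete_lattice_pdcg_order meet_join_distrib meet_components join_components
      top_components bottom_components
    by simp
qed

end
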